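(* Let $(X_t)_{t\geq0}$ be a right-continuous stochastic process on a filtered probability space $(\Omega,\mathscr F,\mathbb P;(\mathscr F_t)_{t\geq0})$. Suppose that for some $Y\in L^1(\Omega)$ and $A>0$, for every $t\geq0$, $|X_t|\leq Y$ and $\mathbb E(X_t\,|\,\mathscr F_t)\leq A$ $\mathbb P$-a.s. Then for any finite stopping time $\tau$, $\mathbb E(X_\tau\,|\,\mathscr F_\tau)\leq A$ $\mathbb P$-a.s. *)

theory Defs
  imports "HOL-Probability.Probability"
begin

(* The filtration (F_t)_{t>=0} is given on t >= 0 only; to use the library's
   stopping_time / filtration.pre_sigma (which quantify over all real t),
   we extend it to negative times constantly: F_t := F_0 for t < 0. *)
definition ext_filtration :: "(real \<Rightarrow> 'a measure) \<Rightarrow> real \<Rightarrow> 'a measure" where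
  "ext_filtration F t = F (max 0 t)"

end

theory Submission
  imports Defs
begin

(* Approximate \<tau> from above by the dyadic times \<tau>_n = ceiling (2^n \<tau>) / 2^n. For B in F_\<tau>, the
   piece of B where \<tau>_n = k / 2^n lies in F_(k/2^n), so the hypothesis on X_(k/2^n) gives
   \<integral>_B (X_(\<tau>_n) - A) \<le> 0 after summing over k (cut off at \<tau>_n \<le> n). Right-continuity gives
   X_(\<tau>_n) \<rightarrow> X_\<tau>, and domination by Y passes the inequality to the limit. The resulting
   \<integral>_B (X_\<tau> - A) \<le> 0 for all B in F_\<tau> characterises E(X_\<tau> | F_\<tau>) \<le> A. *)

lemma integrable_imp_set_integrable:
  fixes f :: "'a \<Rightarrow> 'b::{banach, second_countable_topology}"
  shows "A \<in> sets M \<Longrightarrow> integrable M f \<Longrightarrow> set_integrable M A f"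
  unfolding set_integrable_def by (rule integrable_mult_indicator)

context finite_measure_subalgebra
begin

lemma set_integral_real_cond_exp_diff_const:
  assumes "integrable M f" and "A \<in> sets F"
  shows "(\<integral>x\<in>A. real_cond_exp M F f x - c \<partial>M) = (\<integral>x\<in>A. f x - c \<partial>M)"
proof -
  have "A \<in> sets M"
    using assms(2) subalg by (auto simp: subalgebra_def)
  then have "set_integrable M A f" "set_integrable M A (real_cond_exp M F f)"
    "set_integrable M A (\<lambda>_. c)"
    using assms(1) by (auto intro!: integrable_imp_set_integrable)
  then show ?thesis
    using real_cond_exp_intA[OF assms] by simp
qed

lemma real_cond_exp_le_const_iff:
  assumes f: "integrable M f"
  shows "(AE x in M. real_cond_exp M F f x \<le> c) \<longleftrightarrow> (\<forall>A\<in>sets F. (\<integral>x\<in>A. f x - c \<partial>M) \<le> 0)"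
proof
  assume le: "AE x in M. real_cond_exp M F f x \<le> c"
  show "\<forall>A\<in>sets F. (\<integral>x\<in>A. f x - c \<partial>M) \<le> 0"
  proof
    fix A assume A: "A \<in> sets F"
    then have "A \<in> sets M"
      using subalg by (auto simp: subalgebra_def)
    then have "(\<integral>x\<in>A. real_cond_exp M F f x - c \<partial>M) \<le> (\<integral>x\<in>A. 0 \<partial>M)"
      using le f by (intro set_integral_mono_AE integrable_imp_set_integrable) auto
    then show "(\<integral>x\<in>A. f x - c \<partial>M) \<le> 0"
      using set_integral_real_cond_exp_diff_const[OF f A] by simp
  qed
next
  assume nonpos: "\<forall>A\<in>sets F. (\<integral>x\<in>A. f x - c \<partial>M) \<le> 0"
  have [measurable]: "real_cond_exp M F f \<in> borel_measurable F"
    by simp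
  define A where "A = {x\<in>space M. c < real_cond_exp M F f x}"
  have "space F = space M"
    using subalg by (simp add: subalgebra_def)
  have "{x\<in>space F. c < real_cond_exp M F f x} \<in> sets F"
    by measurable
  then have AF: "A \<in> sets F"
    unfolding A_def \<open>space F = space M\<close> .
  have AM: "A \<in> sets M"
    using AF subalg by (auto simp: subalgebra_def)
  define g where "g = (\<lambda>x. indicator A x * (real_cond_exp M F f x - c))"
  have g_nonneg: "0 \<le> g x" for x
    by (simp add: g_def A_def indicator_def)
  have "integral\<^sup>L M g \<le> 0"
    using nonpos AF set_integral_real_cond_exp_diff_const[OF f AF]
    by (simp add: g_def set_lebesgue_integral_def)
  then have "integral\<^sup>L M g = 0"
    using g_nonneg by (simp add: antisym)
  moreover have "set_integrable M A (\<lambda>x. real_cond_exp M F f x - c)"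
    using AM f by (intro integrable_imp_set_integrable) auto
  then have "integrable M g"
    by (simp add: g_def set_integrable_def)
  ultimately have "AE x in M. g x = 0"
    using g_nonneg by (simp add: integral_nonneg_eq_0_iff_AE)
  with AE_space show "AE x in M. real_cond_exp M F f x \<le> c"
    by eventually_elim (auto simp: g_def A_def indicator_def)
qed

end

lemma (in filtration) pre_sigma_Int_interval:
  assumes T: "stopping_time F T" and A: "A \<in> sets (pre_sigma T)"
  shows "{\<omega>\<in>A. s < T \<omega> \<and> T \<omega> \<le> t} \<in> sets (F t)"
proof -
  have "A \<subseteq> \<Omega>"
    using sets.sets_into_space[OF A] by (simp add: space_pre_sigma)
  then have "{\<omega>\<in>A. s < T \<omega> \<and> T \<omega> \<le> t} = {\<omega>\<in>A. T \<omega> \<le> t} - {\<omega>\<in>space (F t). T \<omega> \<le> min s t}"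
    by (auto simp: space_F)
  also have "\<dots> \<in> sets (F t)"
    using sets_pre_sigmaD[OF T A] stopping_time_le_const[OF T, of "min s t" t]
    by (intro sets.Diff) (auto simp: pred_def)
  finally show ?thesis .
qed

lemma pre_sigma_subalgebra:
  fixes F :: "real \<Rightarrow> 'a measure" and T :: "'a \<Rightarrow> real"
  assumes "filtration (space M) F" and T: "stopping_time F T" and F: "\<And>t. subalgebra M (F t)"
  shows "subalgebra M (filtration.pre_sigma (space M) F T)"
proof -
  interpret filtration "space M" F by fact
  have "A \<in> sets M" if A: "A \<in> sets (pre_sigma T)" for A
  proof -
    have "A = (\<Union>n::nat. {\<omega>\<in>A. T \<omega> \<le> real n})"
      using sets.sets_into_space[OF A] by (auto intro: real_arch_simple)
    also have "\<dots> \<in> sets M"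
      using sets_pre_sigmaD[OF T A] F by (intro sets.countable_UN) (auto simp: subalgebra_def)
    finally show ?thesis .
  qed
  then show ?thesis
    by (auto simp: subalgebra_def space_pre_sigma)
qed

definition dyadic_ceiling :: "nat \<Rightarrow> real \<Rightarrow> real" where
  "dyadic_ceiling n x = \<lceil>2 ^ n * x\<rceil> / 2 ^ n"

lemma dyadic_ceiling_ge: "x \<le> dyadic_ceiling n x"
  using le_of_int_ceiling[of "2 ^ n * x"] by (simp add: dyadic_ceiling_def field_simps)

lemma dyadic_ceiling_le: "dyadic_ceiling n x \<le> x + 1 / 2 ^ n"
  using of_int_ceiling_le_add_one[of "2 ^ n * x"] by (simp add: dyadic_ceiling_def field_simps)

lemma dyadic_ceiling_eq_iff:
  "dyadic_ceiling n x = real k / 2 ^ n \<longleftrightarrow> (real k - 1) / 2 ^ n < x \<and> x \<le> real k / 2 ^ n"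
proof -
  have "dyadic_ceiling n x = real k / 2 ^ n \<longleftrightarrow> \<lceil>2 ^ n * x\<rceil> = int k"
    by (simp add: dyadic_ceiling_def) (metis of_int_eq_iff of_int_of_nat_eq)
  also have "\<dots> \<longleftrightarrow> (real k - 1) / 2 ^ n < x \<and> x \<le> real k / 2 ^ n"
    by (simp add: ceiling_eq_iff pos_divide_less_eq pos_le_divide_eq mult.commute)
  finally show ?thesis .
qed

lemma dyadic_ceiling_nonneg_eq:
  assumes "0 \<le> x"
  shows "dyadic_ceiling n x = real (nat \<lceil>2 ^ n * x\<rceil>) / 2 ^ n"
  using assms by (simp add: dyadic_ceiling_def)

lemma LIMSEQ_dyadic_ceiling: "(\<lambda>n. dyadic_ceiling n x) \<longlonglongrightarrow> x"
proof (rule tendsto_sandwich)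
  show "\<forall>\<^sub>F n in sequentially. x \<le> dyadic_ceiling n x"
    by (simp add: dyadic_ceiling_ge)
  show "\<forall>\<^sub>F n in sequentially. dyadic_ceiling n x \<le> x + 1 / 2 ^ n"
    by (simp add: dyadic_ceiling_le)
  show "(\<lambda>n. x + 1 / 2 ^ n) \<longlonglongrightarrow> x"
    using tendsto_add[OF tendsto_const LIMSEQ_inverse_realpow_zero[of 2]] by (simp add: divide_inverse)
qed simp

lemma tendsto_dyadic_ceiling_at_right:
  assumes "continuous (at_right x) f"
  shows "(\<lambda>n. f (dyadic_ceiling n x)) \<longlonglongrightarrow> f x"
proof -
  have "continuous (at x within {x..}) f"
    using assms by (simp add: at_within_Ici_at_right)
  then show ?thesis
    using LIMSEQ_dyadic_ceiling dyadic_ceiling_ge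
    unfolding continuous_within_sequentially by (auto simp: o_def)
qed

locale stopped_dominated_process = filtration "space M" F + finite_measure M
  for M :: "'a measure" and F :: "real \<Rightarrow> 'a measure" +
  fixes X :: "real \<Rightarrow> 'a \<Rightarrow> real" and Y :: "'a \<Rightarrow> real" and \<tau> :: "'a \<Rightarrow> real"
  assumes subalgebra_F: "\<And>t. subalgebra M (F t)"
    and borel_measurable_X: "\<And>t. 0 \<le> t \<Longrightarrow> X t \<in> borel_measurable M"
    and continuous_X: "\<And>\<omega> t. \<omega> \<in> space M \<Longrightarrow> 0 \<le> t \<Longrightarrow> continuous (at_right t) (\<lambda>s. X s \<omega>)"
    and integrable_Y: "integrable M Y"
    and abs_X_le_Y: "\<And>t. 0 \<le> t \<Longrightarrow> AE \<omega> in M. \<bar>X t \<omega>\<bar> \<le> Y \<omega>"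
    and stopping_time_\<tau>: "stopping_time F \<tau>"
    and \<tau>_nonneg: "\<And>\<omega>. \<omega> \<in> space M \<Longrightarrow> 0 \<le> \<tau> \<omega>"
begin

lemma integrable_X:
  assumes "0 \<le> t"
  shows "integrable M (X t)"
  using abs_X_le_Y[OF assms]
  by (intro Bochner_Integration.integrable_bound[OF integrable_Y borel_measurable_X[OF assms]])
    (auto elim!: eventually_mono)

definition dyadic_level :: "nat \<Rightarrow> nat \<Rightarrow> 'a set" where
  "dyadic_level n k = {\<omega>\<in>space M. dyadic_ceiling n (\<tau> \<omega>) = real k / 2 ^ n}"

lemma pre_sigma_Int_dyadic_level:
  assumes B: "B \<in> sets (pre_sigma \<tau>)"
  shows "B \<inter> dyadic_level n k \<in> sets (F (real k / 2 ^ n))"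
proof -
  have "B \<subseteq> space M"
    using sets.sets_into_space[OF B] by (simp add: space_pre_sigma)
  then have "B \<inter> dyadic_level n k = {\<omega>\<in>B. (real k - 1) / 2 ^ n < \<tau> \<omega> \<and> \<tau> \<omega> \<le> real k / 2 ^ n}"
    by (auto simp: dyadic_level_def dyadic_ceiling_eq_iff)
  then show ?thesis
    using pre_sigma_Int_interval[OF stopping_time_\<tau> B] by simp
qed

lemma finite_measure_subalgebra_F: "finite_measure_subalgebra M (F t)"
  by (intro finite_measure_subalgebra.intro finite_measure_subalgebra_axioms.intro
      finite_measure_axioms subalgebra_F)

lemma subalgebra_pre_sigma: "subalgebra M (pre_sigma \<tau>)"
  by (rule pre_sigma_subalgebra[OF filtration_axioms stopping_time_\<tau> subalgebra_F])

lemma finite_measure_subalgebra_pre_sigma: "finite_measure_subalgebra M (pre_sigma \<tau>)"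
  by (intro finite_measure_subalgebra.intro finite_measure_subalgebra_axioms.intro
      finite_measure_axioms subalgebra_pre_sigma)

lemma sets_pre_sigma_Int_dyadic_level:
  assumes "B \<in> sets (pre_sigma \<tau>)"
  shows "B \<inter> dyadic_level n k \<in> sets M"
  using pre_sigma_Int_dyadic_level[OF assms, of n k] subalgebra_F[of "real k / 2 ^ n"]
  by (auto simp: subalgebra_def)

definition stopped_approx :: "'a set \<Rightarrow> real \<Rightarrow> nat \<Rightarrow> 'a \<Rightarrow> real" where
  "stopped_approx B c n \<omega> =
    (\<Sum>k\<le>n * 2 ^ n. indicator (B \<inter> dyadic_level n k) \<omega> * (X (real k / 2 ^ n) \<omega> - c))"

lemma stopped_approx_eq:
  assumes \<omega>: "\<omega> \<in> space M"
  shows "stopped_approx B c n \<omega> = (if dyadic_ceiling n (\<tau> \<omega>) \<le> n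
    then indicator B \<omega> * (X (dyadic_ceiling n (\<tau> \<omega>)) \<omega> - c) else 0)"
proof -
  define k\<^sub>0 where "k\<^sub>0 = nat \<lceil>2 ^ n * \<tau> \<omega>\<rceil>"
  have \<tau>_eq: "dyadic_ceiling n (\<tau> \<omega>) = real k\<^sub>0 / 2 ^ n"
    unfolding k\<^sub>0_def using \<tau>_nonneg[OF \<omega>] by (rule dyadic_ceiling_nonneg_eq)
  have "indicator (B \<inter> dyadic_level n k) \<omega> * (X (real k / 2 ^ n) \<omega> - c) =
      (if k = k\<^sub>0 then indicator B \<omega> * (X (real k / 2 ^ n) \<omega> - c) else 0)" for k
    using \<omega> by (auto simp: dyadic_level_def \<tau>_eq indicator_def)
  then have "stopped_approx B c n \<omega> =
      (if k\<^sub>0 \<le> n * 2 ^ n then indicator B \<omega> * (X (real k\<^sub>0 / 2 ^ n) \<omega> - c) else 0)"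
    by (simp add: stopped_approx_def)
  moreover have "k\<^sub>0 \<le> n * 2 ^ n \<longleftrightarrow> real k\<^sub>0 / 2 ^ n \<le> n"
    by (simp add: pos_divide_le_eq) (metis of_nat_le_iff of_nat_mult of_nat_numeral of_nat_power)
  ultimately show ?thesis
    by (simp add: \<tau>_eq)
qed

lemma borel_measurable_stopped_approx:
  assumes "B \<in> sets (pre_sigma \<tau>)"
  shows "stopped_approx B c n \<in> borel_measurable M"
  unfolding stopped_approx_def
  using sets_pre_sigma_Int_dyadic_level[OF assms] borel_measurable_X by measurable

lemma stopped_approx_bound: "AE \<omega> in M. \<bar>stopped_approx B c n \<omega>\<bar> \<le> Y \<omega> + \<bar>c\<bar>"
proof -
  have "AE \<omega> in M. \<forall>k::nat. \<bar>X (real k / 2 ^ n) \<omega>\<bar> \<le> Y \<omega>"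
    using abs_X_le_Y by (simp add: AE_all_countable)
  with AE_space show ?thesis
  proof eventually_elim
    case (elim \<omega>)
    obtain k :: nat where "dyadic_ceiling n (\<tau> \<omega>) = real k / 2 ^ n"
      using dyadic_ceiling_nonneg_eq[OF \<tau>_nonneg[OF elim(1)]] by blast
    then have "\<bar>X (dyadic_ceiling n (\<tau> \<omega>)) \<omega> - c\<bar> \<le> Y \<omega> + \<bar>c\<bar>"
      using elim(2) abs_triangle_ineq4[of "X (dyadic_ceiling n (\<tau> \<omega>)) \<omega>" c] by (metis add_right_mono order_trans)
    moreover have "0 \<le> Y \<omega>"
      using elim(2) by (metis abs_ge_zero order_trans)
    ultimately show ?case
      by (auto simp: stopped_approx_eq[OF elim(1)] indicator_def)
  qed
qed

lemma stopped_approx_tendsto: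
  assumes \<omega>: "\<omega> \<in> space M"
  shows "(\<lambda>n. stopped_approx B c n \<omega>) \<longlonglongrightarrow> indicator B \<omega> * (X (\<tau> \<omega>) \<omega> - c)"
proof -
  obtain N :: nat where N: "\<tau> \<omega> + 1 \<le> N"
    using real_arch_simple by blast
  have "dyadic_ceiling n (\<tau> \<omega>) \<le> n" if "N \<le> n" for n
  proof -
    have "dyadic_ceiling n (\<tau> \<omega>) \<le> \<tau> \<omega> + 1"
      using dyadic_ceiling_le[of n "\<tau> \<omega>"] by (simp add: order_trans)
    with N that show ?thesis
      by linarith
  qed
  then have "\<forall>\<^sub>F n in sequentially.
      indicator B \<omega> * (X (dyadic_ceiling n (\<tau> \<omega>)) \<omega> - c) = stopped_approx B c n \<omega>"
    unfolding eventually_sequentially by (auto simp: stopped_approx_eq[OF \<omega>])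
  moreover have "(\<lambda>n. indicator B \<omega> * (X (dyadic_ceiling n (\<tau> \<omega>)) \<omega> - c))
      \<longlonglongrightarrow> indicator B \<omega> * (X (\<tau> \<omega>) \<omega> - c)"
    using tendsto_dyadic_ceiling_at_right[OF continuous_X[OF \<omega> \<tau>_nonneg[OF \<omega>]]]
    by (intro tendsto_intros)
  ultimately show ?thesis
    by (rule Lim_transform_eventually[rotated])
qed

lemma borel_measurable_stopped: "(\<lambda>\<omega>. X (\<tau> \<omega>) \<omega>) \<in> borel_measurable M"
proof (rule borel_measurable_LIMSEQ_real)
  show "stopped_approx (space M) 0 n \<in> borel_measurable M" for n
    by (intro borel_measurable_stopped_approx sets.top[of "pre_sigma \<tau>", unfolded space_pre_sigma])
  show "(\<lambda>n. stopped_approx (space M) 0 n \<omega>) \<longlonglongrightarrow> X (\<tau> \<omega>) \<omega>" if "\<omega> \<in> space M" for \<omega>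
    using stopped_approx_tendsto[OF that, of "space M" 0] that by simp
qed

lemma integrable_stopped: "integrable M (\<lambda>\<omega>. X (\<tau> \<omega>) \<omega>)"
proof (rule integrable_dominated_convergence)
  show "stopped_approx (space M) 0 n \<in> borel_measurable M" for n
    by (intro borel_measurable_stopped_approx sets.top[of "pre_sigma \<tau>", unfolded space_pre_sigma])
  show "AE \<omega> in M. (\<lambda>n. stopped_approx (space M) 0 n \<omega>) \<longlonglongrightarrow> X (\<tau> \<omega>) \<omega>"
    using stopped_approx_tendsto[of _ "space M" 0] by (auto intro!: AE_I2)
  show "AE \<omega> in M. norm (stopped_approx (space M) 0 n \<omega>) \<le> Y \<omega>" for n
    using stopped_approx_bound[of "space M" 0 n] by simp
qed (fact borel_measurable_stopped integrable_Y)+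

lemma integral_stopped_approx_nonpos:
  assumes ce: "\<And>t. 0 \<le> t \<Longrightarrow> AE \<omega> in M. real_cond_exp M (F t) (X t) \<omega> \<le> c"
    and B: "B \<in> sets (pre_sigma \<tau>)"
  shows "integral\<^sup>L M (stopped_approx B c n) \<le> 0"
proof -
  let ?t = "\<lambda>k::nat. real k / 2 ^ n"
  have set_integral_nonpos: "(\<integral>\<omega>\<in>B \<inter> dyadic_level n k. X (?t k) \<omega> - c \<partial>M) \<le> 0" for k
  proof -
    have t: "0 \<le> ?t k"
      by simp
    then have "\<forall>A\<in>sets (F (?t k)). (\<integral>\<omega>\<in>A. X (?t k) \<omega> - c \<partial>M) \<le> 0"
      using finite_measure_subalgebra.real_cond_exp_le_const_iff[OF finite_measure_subalgebra_F
          integrable_X[OF t]] ce[OF t] by blast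
    then show ?thesis
      using pre_sigma_Int_dyadic_level[OF B] by blast
  qed
  have "integrable M (\<lambda>\<omega>. indicator (B \<inter> dyadic_level n k) \<omega> * (X (?t k) \<omega> - c))" for k
    using integrable_mult_indicator[OF sets_pre_sigma_Int_dyadic_level[OF B]
        Bochner_Integration.integrable_diff[OF integrable_X integrable_const]]
    by simp
  then have "integral\<^sup>L M (stopped_approx B c n) =
      (\<Sum>k\<le>n * 2 ^ n. \<integral>\<omega>\<in>B \<inter> dyadic_level n k. X (?t k) \<omega> - c \<partial>M)"
    unfolding stopped_approx_def set_lebesgue_integral_def real_scaleR_def
    by (rule Bochner_Integration.integral_sum)
  also have "\<dots> \<le> 0"
    by (intro sum_nonpos set_integral_nonpos)
  finally show ?thesis .
qed

lemma set_integral_stopped_nonpos: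
  assumes ce: "\<And>t. 0 \<le> t \<Longrightarrow> AE \<omega> in M. real_cond_exp M (F t) (X t) \<omega> \<le> c"
    and B: "B \<in> sets (pre_sigma \<tau>)"
  shows "(\<integral>\<omega>\<in>B. X (\<tau> \<omega>) \<omega> - c \<partial>M) \<le> 0"
proof -
  have "B \<in> sets M"
    using B subalgebra_pre_sigma by (auto simp: subalgebra_def)
  then have "(\<lambda>n. integral\<^sup>L M (stopped_approx B c n)) \<longlonglongrightarrow> (\<integral>\<omega>\<in>B. X (\<tau> \<omega>) \<omega> - c \<partial>M)"
    unfolding set_lebesgue_integral_def
    using borel_measurable_stopped borel_measurable_stopped_approx[OF B] stopped_approx_bound
      stopped_approx_tendsto integrable_Y
    by (intro integral_dominated_convergence[where w="\<lambda>\<omega>. Y \<omega> + \<bar>c\<bar>"]) (auto intro!: AE_I2)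
  moreover have "integral\<^sup>L M (stopped_approx B c n) \<le> 0" for n
    using ce B by (rule integral_stopped_approx_nonpos)
  ultimately show ?thesis
    by (intro LIMSEQ_le_const2) auto
qed

lemma real_cond_exp_stopped_le:
  assumes "\<And>t. 0 \<le> t \<Longrightarrow> AE \<omega> in M. real_cond_exp M (F t) (X t) \<omega> \<le> c"
  shows "AE \<omega> in M. real_cond_exp M (pre_sigma \<tau>) (\<lambda>\<omega>. X (\<tau> \<omega>) \<omega>) \<omega> \<le> c"
  using finite_measure_subalgebra.real_cond_exp_le_const_iff[OF finite_measure_subalgebra_pre_sigma
      integrable_stopped] set_integral_stopped_nonpos[OF assms] by blast

end

theorem lemma4p4:
  fixes M :: "'a measure" and F :: "real \<Rightarrow> 'a measure"
    and X :: "real \<Rightarrow> 'a \<Rightarrow> real" and Y :: "'a \<Rightarrow> real" and A :: real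
    and \<tau> :: "'a \<Rightarrow> real"
  assumes prob: "prob_space M"
    and filt_sub: "\<And>t. 0 \<le> t \<Longrightarrow> subalgebra M (F t)"
    and filt_mono: "\<And>s t. 0 \<le> s \<Longrightarrow> s \<le> t \<Longrightarrow> sets (F s) \<subseteq> sets (F t)"
    and X_meas: "\<And>t. 0 \<le> t \<Longrightarrow> X t \<in> borel_measurable M"
    and X_rcont: "\<And>\<omega> t. \<omega> \<in> space M \<Longrightarrow> 0 \<le> t \<Longrightarrow> continuous (at_right t) (\<lambda>s. X s \<omega>)"
    and Y_int: "integrable M Y"
    and A_pos: "A > 0"
    and X_bound: "\<And>t. 0 \<le> t \<Longrightarrow> AE \<omega> in M. \<bar>X t \<omega>\<bar> \<le> Y \<omega>"
    and X_ce: "\<And>t. 0 \<le> t \<Longrightarrow> AE \<omega> in M. real_cond_exp M (F t) (X t) \<omega> \<le> A"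
    and tau_nonneg: "\<And>\<omega>. \<omega> \<in> space M \<Longrightarrow> 0 \<le> \<tau> \<omega>"
    and tau_stop: "stopping_time (ext_filtration F) \<tau>"
  shows "AE \<omega> in M. real_cond_exp M (filtration.pre_sigma (space M) (ext_filtration F) \<tau>)
                        (\<lambda>\<omega>'. X (\<tau> \<omega>') \<omega>') \<omega> \<le> A"
proof -
  have ext_F: "ext_filtration F t = F t" if "0 \<le> t" for t
    using that by (simp add: ext_filtration_def)
  interpret stopped_dominated_process M "ext_filtration F" X Y \<tau>
  proof (intro stopped_dominated_process.intro stopped_dominated_process_axioms.intro filtration.intro)
    show "subalgebra M (ext_filtration F t)" for t
      using filt_sub[of "max 0 t"] by (simp add: ext_filtration_def)
    then show "space (ext_filtration F t) = space M" for t
      by (simp add: subalgebra_def)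
    show "sets (ext_filtration F s) \<subseteq> sets (ext_filtration F t)" if "s \<le> t" for s t
      using filt_mono[of "max 0 s" "max 0 t"] that by (simp add: ext_filtration_def)
    show "finite_measure M"
      using prob by (simp add: prob_space_def)
  qed (use X_meas X_rcont Y_int X_bound tau_stop tau_nonneg in auto)
  show ?thesis
    using X_ce by (intro real_cond_exp_stopped_le) (simp add: ext_F)
qed

end
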